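(* Fix any total budget $\mathrm{TB}\in\mathbb N_0$ and a game form $G$. If $G$ is a number, then $G+\bar G=0$.
   Context: Game forms are defined recursively: $G=\{G^{\mathcal L}\mid G^{\mathcal R}\}$ with finite sets of Left and Right options, and finite birthday. $0=\{\varnothing\mid\varnothing\}$. The conjugate is $\bar G=\{\overline{G^{\mathcal R}}\mid\overline{G^{\mathcal L}}\}$ (recursively, roles of the players swapped). The budget set for total budget $\mathrm{TB}$ is $\mathcal B=\{0,\dots,\mathrm{TB},\hat 0,\dots,\widehat{\mathrm{TB}}\}$: state $p$ (resp. $\hat p$) means Left holds $p$ dollars and Right holds $\mathrm{TB}-p$, and Right (resp. Left) holds the tie-breaking marker. Play of $(G,\tilde p)$: at every position (terminal ones included) both players bid simultaneously, Left $\ell\in\{0,\dots,p\}$, Right $r\in\{0,\dots,\mathrm{TB}-p\}$. If Left holds the marker (state $\hat p$): if $\ell>r$ Left moves to $(G^L,\widehat{p-\ell})$, or, including the marker (allowed when $\ell\ge r$), to $(G^L,p-\ell)$; if $\ell=r$ Left wins, the marker passes to Right, play continues at $(G^L,p-\ell)$; if $\ell<r$ Right moves to $(G^R,\widehat{p+r})$. Symmetrically when Right holds the marker (state $p$): if $r>\ell$ Right moves to $(G^R,p+r)$ or, including the marker, to $(G^R,\widehat{p+r})$; if $r=\ell$ Right wins, the marker passes to Left, play continues at $(G^R,\widehat{p+r})$; if $r<\ell$ Left moves to $(G^L,p-\ell)$. A player who wins a bid but has no option loses. $o(G,\tilde p)\in\{\mathrm L,\mathrm R\}$ is the winner under optimal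 play; $\mathrm L>\mathrm R$. Disjunctive sum $G+H=\{G^{\mathcal L}+H,G+H^{\mathcal L}\mid G^{\mathcal R}+H,G+H^{\mathcal R}\}$. $G\ge H$ means $o(G+X,\tilde p)\ge o(H+X,\tilde p)$ for all game forms $X$ and all $\tilde p\in\mathcal B$; $G=H$ means $G\ge H$ and $H\ge G$; $G>H$ means $G\ge H$ and not $H\ge G$. A game form $G$ is a number if all its options are numbers and $G^L<G<G^R$ for all $G^L\in G^{\mathcal L}$, $G^R\in G^{\mathcal R}$. *)

theory Defs
  imports Main "HOL-Library.FSet"
begin

text \<open>A game form \<open>Game L R\<close> has a finite set \<open>L\<close> of Left options and a finite
  set \<open>R\<close> of Right options; being a datatype, every game form has finite birthday.\<close>

datatype game = Game (lopts: "game fset") (ropts: "game fset")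

definition zero_game :: game where
  "zero_game = Game {||} {||}"

primrec conj_game :: "game \<Rightarrow> game" where
  "conj_game (Game L R) = Game (fimage conj_game R) (fimage conj_game L)"

lemma game_size_lopt: "x |\<in>| L \<Longrightarrow> size x < size (Game L R)"
  by (induct L) (auto simp: size_fset_overloaded_simps)

lemma game_size_ropt: "x |\<in>| R \<Longrightarrow> size x < size (Game L R)"
  by (induct R) (auto simp: size_fset_overloaded_simps)

function plus_game :: "game \<Rightarrow> game \<Rightarrow> game" where
  "plus_game (Game L R) (Game L' R') =
     Game (fimage (\<lambda>x. plus_game x (Game L' R')) L |\<union>| fimage (\<lambda>y. plus_game (Game L R) y) L')
          (fimage (\<lambda>x. plus_game x (Game L' R')) R |\<union>| fimage (\<lambda>y. plus_game (Game L R) y) R')"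
  by pat_completeness auto
termination
  by (relation "measure (\<lambda>(G, H). size G + size H)")
     (auto dest: game_size_lopt game_size_ropt)

text \<open>Budget states for total budget \<open>TB\<close>: a pair \<open>(p, m)\<close> with \<open>p \<le> TB\<close>;
  Left holds \<open>p\<close> dollars and Right holds \<open>TB - p\<close>.  \<open>m = True\<close> encodes the hatted
  state \<open>p\<^sup>^\<close> (Left holds the tie-breaking marker), \<open>m = False\<close> the plain state \<open>p\<close>
  (Right holds the marker).\<close>

definition budget_states :: "nat \<Rightarrow> (nat \<times> bool) set" where
  "budget_states TB = {(p, m). p \<le> TB}"

text \<open>\<open>lwins TB G p m\<close>: Left can force a win in \<open>(G, state (p,m))\<close>, i.e. there is a bid
  \<open>l\<close> of Left such that for every bid \<open>r\<close> of Right the resulting continuation is won by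
  Left (when Left wins the bid she chooses the option and, where permitted, whether to
  include the marker; when Right wins the bid he chooses).  A player who wins a bid
  but has no option loses (empty existential / empty universal).\<close>

function lwins :: "nat \<Rightarrow> game \<Rightarrow> nat \<Rightarrow> bool \<Rightarrow> bool" where
  "lwins TB (Game L R) p m =
    (\<exists>l\<le>p. \<forall>r\<le>TB - p.
       (if m then
          (if r < l then (\<exists>x\<in>fset L. lwins TB x (p - l) True \<or> lwins TB x (p - l) False)
           else if l = r then (\<exists>x\<in>fset L. lwins TB x (p - l) False)
           else (\<forall>y\<in>fset R. lwins TB y (p + r) True))
        else
          (if l < r then (\<forall>y\<in>fset R. lwins TB y (p + r) False \<and> lwins TB y (p + r) True)
           else if l = r then (\<forall>y\<in>fset R. lwins TB y (p + r) True)
           else (\<exists>x\<in>fset L. lwins TB x (p - l) False))))"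
  by pat_completeness auto
termination
  by (relation "measure (\<lambda>(TB, G, p, m). size G)")
     (auto dest: game_size_lopt game_size_ropt)

datatype outcome = OL | OR

definition outcome :: "nat \<Rightarrow> game \<Rightarrow> nat \<times> bool \<Rightarrow> outcome" where
  "outcome TB G s = (if lwins TB G (fst s) (snd s) then OL else OR)"

definition outcome_le :: "outcome \<Rightarrow> outcome \<Rightarrow> bool" where
  "outcome_le a b \<longleftrightarrow> a = b \<or> (a = OR \<and> b = OL)"

definition game_ge :: "nat \<Rightarrow> game \<Rightarrow> game \<Rightarrow> bool" where
  "game_ge TB G H \<longleftrightarrow>
     (\<forall>X. \<forall>s\<in>budget_states TB.
        outcome_le (outcome TB (plus_game H X) s) (outcome TB (plus_game G X) s))"

definition game_eq :: "nat \<Rightarrow> game \<Rightarrow> game \<Rightarrow> bool" where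
  "game_eq TB G H \<longleftrightarrow> game_ge TB G H \<and> game_ge TB H G"

definition game_gt :: "nat \<Rightarrow> game \<Rightarrow> game \<Rightarrow> bool" where
  "game_gt TB G H \<longleftrightarrow> game_ge TB G H \<and> \<not> game_ge TB H G"

inductive is_number :: "nat \<Rightarrow> game \<Rightarrow> bool" for TB where
  "\<lbrakk> \<forall>x\<in>fset L. is_number TB x; \<forall>y\<in>fset R. is_number TB y;
     \<forall>x\<in>fset L. game_gt TB (Game L R) x; \<forall>y\<in>fset R. game_gt TB y (Game L R) \<rbrakk>
   \<Longrightarrow> is_number TB (Game L R)"

end

theory Submission
  imports Defs
begin

text \<open>Write \<open>H - G\<close> for \<open>H + conj G\<close>. If \<open>G \<le> H\<close> are numbers in the normal-play order, Left
  wins \<open>(H - G) + X\<close> from every budget state from which she wins \<open>X\<close>: she bids and moves as in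
  \<open>X\<close>, and a Right move in \<open>H - G\<close> leads to a difference \<open>H' - G'\<close> with \<open>G' < H'\<close>. For such
  a strict difference Left even wins with the marker wherever she wins \<open>X\<close> without it: the
  marker only matters at a tie, and a tie at bid \<open>0\<close>, which forces her to move, she answers
  by a Left move in \<open>H - G\<close> to a difference \<open>H' - G'\<close> with \<open>G' \<le> H'\<close>. Both claims are proved
  together by induction, and dually Left wins \<open>X\<close> wherever she wins \<open>(G - H) + X\<close>. With
  \<open>G = H\<close>, adding \<open>G - G\<close> never changes an outcome. Finally, the bidding notion of number
  implies the normal-play one, since the claims above show that \<open>G \<le> H\<close> in the normal-play
  order implies \<open>G \<le> H\<close> in the bidding order.\<close>

abbreviation minus_game :: "game \<Rightarrow> game \<Rightarrow> game" where
  "minus_game G H \<equiv> plus_game G (conj_game H)"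

lemma size_lopts: "x |\<in>| lopts G \<Longrightarrow> size x < size G"
  by (cases G) (auto dest: game_size_lopt)

lemma size_ropts: "y |\<in>| ropts G \<Longrightarrow> size y < size G"
  by (cases G) (auto dest: game_size_ropt)

lemma game_ext: "lopts G = lopts H \<Longrightarrow> ropts G = ropts H \<Longrightarrow> G = H"
  by (cases G; cases H) simp

lemma lopts_plus_game:
  "lopts (plus_game G H) = (\<lambda>x. plus_game x H) |`| lopts G |\<union>| plus_game G |`| lopts H"
  by (cases G; cases H) simp

lemma ropts_plus_game:
  "ropts (plus_game G H) = (\<lambda>y. plus_game y H) |`| ropts G |\<union>| plus_game G |`| ropts H"
  by (cases G; cases H) simp

lemma lopts_conj_game: "lopts (conj_game G) = conj_game |`| ropts G"
  by (cases G) simp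

lemma ropts_conj_game: "ropts (conj_game G) = conj_game |`| lopts G"
  by (cases G) simp

lemma plus_game_comm: "plus_game G H = plus_game H G"
proof (induction "size G + size H" arbitrary: G H rule: less_induct)
  case less
  have "plus_game x H = plus_game H x" if "x |\<in>| lopts G |\<union>| ropts G" for x
    using less that size_lopts size_ropts by fastforce
  moreover have "plus_game G y = plus_game y G" if "y |\<in>| lopts H |\<union>| ropts H" for y
    using less that size_lopts size_ropts by fastforce
  ultimately show ?case
    by (intro game_ext) (auto simp: lopts_plus_game ropts_plus_game fimage_iff)
qed

lemma plus_game_assoc: "plus_game (plus_game A B) C = plus_game A (plus_game B C)"
proof (induction "size A + size B + size C" arbitrary: A B C rule: less_induct)
  case less
  have "plus_game (plus_game x B) C = plus_game x (plus_game B C)"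
    if "x |\<in>| lopts A |\<union>| ropts A" for x
    using less that size_lopts size_ropts by fastforce
  moreover have "plus_game (plus_game A y) C = plus_game A (plus_game y C)"
    if "y |\<in>| lopts B |\<union>| ropts B" for y
    using less that size_lopts size_ropts by fastforce
  moreover have "plus_game (plus_game A B) z = plus_game A (plus_game B z)"
    if "z |\<in>| lopts C |\<union>| ropts C" for z
    using less that size_lopts size_ropts by fastforce
  ultimately show ?case
    by (intro game_ext) (auto simp: lopts_plus_game ropts_plus_game fimage_funion fimage_iff)
qed

lemma plus_game_left_comm: "plus_game A (plus_game B C) = plus_game B (plus_game A C)"
  by (metis plus_game_assoc plus_game_comm)

lemma plus_game_zero_left: "plus_game zero_game X = X"
proof (induction "size X" arbitrary: X rule: less_induct)
  case less
  then have "plus_game zero_game |`| lopts X = lopts X" "plus_game zero_game |`| ropts X = ropts X"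
    using size_lopts size_ropts by (simp_all add: fset.map_ident_strong)
  then show ?case
    by (intro game_ext) (simp_all add: lopts_plus_game ropts_plus_game zero_game_def)
qed

section \<open>The normal-play order and its numbers\<close>

function conv_le :: "game \<Rightarrow> game \<Rightarrow> bool" where
  "conv_le (Game L R) (Game L' R') \<longleftrightarrow>
     (\<forall>x\<in>fset L. \<not> conv_le (Game L' R') x) \<and> (\<forall>y\<in>fset R'. \<not> conv_le y (Game L R))"
  by pat_completeness auto
termination
  by (relation "measure (\<lambda>(G, H). size G + size H)")
     (auto dest: game_size_lopt game_size_ropt)

lemma conv_le_iff:
  "conv_le G H \<longleftrightarrow> (\<forall>x\<in>fset (lopts G). \<not> conv_le H x) \<and> (\<forall>y\<in>fset (ropts H). \<not> conv_le y G)"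
  by (cases G; cases H) simp

lemma conv_le_refl: "conv_le G G"
proof (induction "size G" arbitrary: G rule: less_induct)
  case less
  have "\<not> conv_le G x" if x: "x |\<in>| lopts G" for x
  proof -
    have "conv_le x x"
      using less size_lopts[OF x] by blast
    with x show ?thesis
      by (subst conv_le_iff) auto
  qed
  moreover have "\<not> conv_le y G" if y: "y |\<in>| ropts G" for y
  proof -
    have "conv_le y y"
      using less size_ropts[OF y] by blast
    with y show ?thesis
      by (subst conv_le_iff) auto
  qed
  ultimately show ?case
    by (simp add: conv_le_iff[of G G])
qed

lemma not_conv_le_lopt: "x |\<in>| lopts G \<Longrightarrow> \<not> conv_le G x"
  using conv_le_refl[of x] by (subst conv_le_iff) auto

lemma not_conv_le_ropt: "y |\<in>| ropts G \<Longrightarrow> \<not> conv_le y G"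
  using conv_le_refl[of y] by (subst conv_le_iff) auto

lemma conv_le_trans: "conv_le A B \<Longrightarrow> conv_le B C \<Longrightarrow> conv_le A C"
proof (induction "size A + size B + size C" arbitrary: A B C rule: less_induct)
  case less
  have "\<not> conv_le C x" if x: "x |\<in>| lopts A" for x
  proof
    assume "conv_le C x"
    moreover have "size B + size C + size x < size A + size B + size C"
      using size_lopts[OF x] by simp
    ultimately have "conv_le B x"
      using less(1,3) by blast
    with x less(2) show False
      by (subst (asm) conv_le_iff) auto
  qed
  moreover have "\<not> conv_le y A" if y: "y |\<in>| ropts C" for y
  proof
    assume "conv_le y A"
    moreover have "size y + size A + size B < size A + size B + size C"
      using size_ropts[OF y] by simp
    ultimately have "conv_le y B"
      using less(1,2) by blast
    with y less(3) show False
      by (subst (asm) conv_le_iff) auto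
  qed
  ultimately show ?case
    by (simp add: conv_le_iff[of A C])
qed

definition conv_lt :: "game \<Rightarrow> game \<Rightarrow> bool" where
  "conv_lt G H \<longleftrightarrow> conv_le G H \<and> \<not> conv_le H G"

inductive conv_number :: "game \<Rightarrow> bool" where
  "\<lbrakk> \<forall>x\<in>fset L. conv_number x; \<forall>y\<in>fset R. conv_number y;
     \<forall>x\<in>fset L. conv_lt x (Game L R); \<forall>y\<in>fset R. conv_lt (Game L R) y \<rbrakk>
   \<Longrightarrow> conv_number (Game L R)"

lemma conv_number_lopt: "conv_number G \<Longrightarrow> x |\<in>| lopts G \<Longrightarrow> conv_number x \<and> conv_lt x G"
  by (induction rule: conv_number.induct) auto

lemma conv_number_ropt: "conv_number G \<Longrightarrow> y |\<in>| ropts G \<Longrightarrow> conv_number y \<and> conv_lt G y"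
  by (induction rule: conv_number.induct) auto

lemma conv_numberI:
  assumes L: "\<forall>x\<in>fset L. conv_number x" and R: "\<forall>y\<in>fset R. conv_number y"
    and no_overlap: "\<forall>x\<in>fset L. \<forall>y\<in>fset R. \<not> conv_le y x"
  shows "conv_number (Game L R)"
proof -
  let ?G = "Game L R"
  have "conv_le x ?G" if x: "x \<in> fset L" for x
  proof -
    have "\<not> conv_le ?G x'" if "x' |\<in>| lopts x" for x'
      using that x L conv_number_lopt[of x x'] conv_le_trans not_conv_le_lopt[of x ?G]
      unfolding conv_lt_def by auto
    with x no_overlap show ?thesis
      by (simp add: conv_le_iff[of x ?G])
  qed
  moreover have "conv_le ?G y" if y: "y \<in> fset R" for y
  proof -
    have "\<not> conv_le y' ?G" if "y' |\<in>| ropts y" for y'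
      using that y R conv_number_ropt[of y y'] conv_le_trans not_conv_le_ropt[of y ?G]
      unfolding conv_lt_def by auto
    with y no_overlap show ?thesis
      by (simp add: conv_le_iff[of ?G y])
  qed
  ultimately show ?thesis
    using L R not_conv_le_lopt[of _ ?G] not_conv_le_ropt[of _ ?G]
    by (intro conv_number.intros) (auto simp: conv_lt_def)
qed

definition lmove_wins :: "nat \<Rightarrow> game \<Rightarrow> nat \<Rightarrow> bool \<Rightarrow> bool" where
  "lmove_wins TB X q m \<longleftrightarrow> (\<exists>x\<in>fset (lopts X). lwins TB x q m)"

definition rmoves_win :: "nat \<Rightarrow> game \<Rightarrow> nat \<Rightarrow> bool \<Rightarrow> bool" where
  "rmoves_win TB X q m \<longleftrightarrow> (\<forall>y\<in>fset (ropts X). lwins TB y q m)"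

definition round_won :: "nat \<Rightarrow> game \<Rightarrow> nat \<Rightarrow> bool \<Rightarrow> nat \<Rightarrow> nat \<Rightarrow> bool" where
  "round_won TB X p m l r \<longleftrightarrow>
    (if m then
       (if r < l then lmove_wins TB X (p - l) True \<or> lmove_wins TB X (p - l) False
        else if l = r then lmove_wins TB X (p - l) False
        else rmoves_win TB X (p + r) True)
     else
       (if l < r then rmoves_win TB X (p + r) False \<and> rmoves_win TB X (p + r) True
        else if l = r then rmoves_win TB X (p + r) True
        else lmove_wins TB X (p - l) False))"

lemma lwins_iff_round_won:
  "lwins TB X p m \<longleftrightarrow> (\<exists>l\<le>p. \<forall>r\<le>TB - p. round_won TB X p m l r)"
  by (cases X) (simp add: round_won_def lmove_wins_def rmoves_win_def
      bex_disj_distrib ball_conj_distrib)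

lemma round_won_transfer:
  assumes "round_won TB X p m l r"
    and "\<And>m'. (\<not> m \<Longrightarrow> \<not> m') \<Longrightarrow> lmove_wins TB X (p - l) m' \<Longrightarrow> lmove_wins TB W (p' - l) m'"
    and "\<And>m'. (m \<Longrightarrow> m') \<Longrightarrow> rmoves_win TB X (p + r) m' \<Longrightarrow> rmoves_win TB W (p' + r) m'"
  shows "round_won TB W p' m l r"
  using assms unfolding round_won_def by (cases m) auto

lemma lwins_budget_mono: "lwins TB X p m \<Longrightarrow> p \<le> p' \<Longrightarrow> lwins TB X p' m"
proof (induction "size X" arbitrary: X p p' m rule: less_induct)
  case less
  have lmove: "lmove_wins TB X a m' \<Longrightarrow> a \<le> b \<Longrightarrow> lmove_wins TB X b m'" for a b m'
    unfolding lmove_wins_def using less(1) size_lopts by blast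
  have rmoves: "rmoves_win TB X a m' \<Longrightarrow> a \<le> b \<Longrightarrow> rmoves_win TB X b m'" for a b m'
    unfolding rmoves_win_def using less(1) size_ropts by blast
  obtain l where l: "l \<le> p" and round: "\<forall>r\<le>TB - p. round_won TB X p m l r"
    using less(2) unfolding lwins_iff_round_won by blast
  have "round_won TB X p' m l r" if "r \<le> TB - p'" for r
  proof (rule round_won_transfer)
    show "round_won TB X p m l r"
      using round that less(3) by simp
  qed (use lmove rmoves less(3) in auto)
  then show ?case
    using l less(3) unfolding lwins_iff_round_won by (auto intro!: exI[of _ l])
qed

lemma lwins_transfer:
  assumes "lwins TB X p m"
    and "\<And>q m'. q \<le> p \<Longrightarrow> (\<not> m \<Longrightarrow> \<not> m') \<Longrightarrow> lmove_wins TB X q m' \<Longrightarrow> lmove_wins TB W q m'"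
    and "\<And>q m'. p \<le> q \<Longrightarrow> (m \<Longrightarrow> m') \<Longrightarrow> rmoves_win TB X q m' \<Longrightarrow> rmoves_win TB W q m'"
  shows "lwins TB W p m"
proof -
  obtain l where l: "l \<le> p" and round: "\<forall>r\<le>TB - p. round_won TB X p m l r"
    using assms(1) unfolding lwins_iff_round_won by blast
  have "round_won TB W p m l r" if "r \<le> TB - p" for r
  proof (rule round_won_transfer)
    show "round_won TB X p m l r"
      using round that by simp
    show "lmove_wins TB W (p - l) m'" if "\<not> m \<Longrightarrow> \<not> m'" "lmove_wins TB X (p - l) m'" for m'
      using assms(2)[of "p - l" m'] that by simp
    show "rmoves_win TB W (p + r) m'" if "m \<Longrightarrow> m'" "rmoves_win TB X (p + r) m'" for m'
      using assms(3)[of "p + r" m'] that by simp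
  qed
  then show ?thesis
    using l unfolding lwins_iff_round_won by (auto intro!: exI[of _ l])
qed

text \<open>Left keeps her bid \<open>l\<close>; holding the marker she now wins a tie, and for \<open>l > 0\<close> the
  move she makes then is the one she had against Right's bid \<open>l - 1\<close>.\<close>

lemma lwins_with_marker:
  assumes l: "l \<le> q" and round: "\<forall>r\<le>TB - q. round_won TB X q False l r"
    and lmove: "lmove_wins TB X (q - l) False \<Longrightarrow> lmove_wins TB W (q - l) False"
    and rmoves: "\<And>r. l < r \<Longrightarrow> r \<le> TB - q \<Longrightarrow>
      rmoves_win TB X (q + r) True \<Longrightarrow> rmoves_win TB W (q + r) True"
    and tie: "l = 0 \<Longrightarrow> lmove_wins TB W q False"
  shows "lwins TB W q True"
proof -
  have "round_won TB W q True l r" if r: "r \<le> TB - q" for r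
  proof (cases r l rule: linorder_cases)
    case less
    then show ?thesis
      using round r lmove unfolding round_won_def by auto
  next
    case equal
    have "lmove_wins TB W (q - l) False"
    proof (cases "l = 0")
      case True
      then show ?thesis
        using tie by simp
    next
      case False
      then have "round_won TB X q False l (l - 1)"
        using round r equal by simp
      then show ?thesis
        using False lmove unfolding round_won_def by simp
    qed
    then show ?thesis
      using equal unfolding round_won_def by simp
  next
    case greater
    then show ?thesis
      using round r rmoves unfolding round_won_def by simp
  qed
  then show ?thesis
    using l unfolding lwins_iff_round_won by (auto intro!: exI[of _ l])
qed

section \<open>Copying a strategy through a sum\<close>

definition lwins_le :: "nat \<Rightarrow> game \<Rightarrow> game \<Rightarrow> bool" where
  "lwins_le TB A B \<longleftrightarrow> (\<forall>p m. lwins TB A p m \<longrightarrow> lwins TB B p m)"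

definition lwins_lt :: "nat \<Rightarrow> game \<Rightarrow> game \<Rightarrow> bool" where
  "lwins_lt TB A B \<longleftrightarrow> lwins_le TB A B \<and> (\<forall>p. lwins TB A p False \<longrightarrow> lwins TB B p True)"

context
  fixes TB :: nat and Z X :: game
  assumes options_X: "\<And>x. x |\<in>| lopts X |\<union>| ropts X \<Longrightarrow> lwins_le TB x (plus_game Z x)"
    and ropts_Z: "\<And>z. z |\<in>| ropts Z \<Longrightarrow> lwins_lt TB X (plus_game z X)"
begin

lemma lmove_wins_plus: "lmove_wins TB X q m \<Longrightarrow> lmove_wins TB (plus_game Z X) q m"
  using options_X unfolding lmove_wins_def lwins_le_def by (force simp: lopts_plus_game)

lemma rmoves_win_plus:
  assumes "rmoves_win TB X q m'" "lwins TB X q m" "m \<Longrightarrow> m'"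
  shows "rmoves_win TB (plus_game Z X) q m'"
  unfolding rmoves_win_def
proof
  fix w assume "w \<in> fset (ropts (plus_game Z X))"
  then consider (in_Z) z where "z |\<in>| ropts Z" "w = plus_game z X"
    | (in_X) y where "y |\<in>| ropts X" "w = plus_game Z y"
    by (auto simp: ropts_plus_game)
  then show "lwins TB w q m'"
  proof cases
    case in_Z
    then show ?thesis
      using ropts_Z[OF in_Z(1)] assms(2,3) unfolding lwins_lt_def lwins_le_def
      by (cases m; cases m') auto
  next
    case in_X
    then show ?thesis
      using options_X[of y] assms(1) unfolding rmoves_win_def lwins_le_def by auto
  qed
qed

lemma lwins_le_plus: "lwins_le TB X (plus_game Z X)"
  unfolding lwins_le_def
proof (intro allI impI)
  fix p m assume X: "lwins TB X p m"
  then show "lwins TB (plus_game Z X) p m"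
    by (rule lwins_transfer)
      (auto intro: lmove_wins_plus rmoves_win_plus lwins_budget_mono[OF X])
qed

lemma lwins_lt_plus:
  assumes z: "z |\<in>| lopts Z" "lwins_le TB X (plus_game z X)"
  shows "lwins_lt TB X (plus_game Z X)"
proof -
  have "lwins TB (plus_game Z X) q True" if X: "lwins TB X q False" for q
  proof -
    obtain l where l: "l \<le> q" and round: "\<forall>r\<le>TB - q. round_won TB X q False l r"
      using X unfolding lwins_iff_round_won by blast
    show ?thesis
    proof (rule lwins_with_marker[OF l round])
      show "rmoves_win TB (plus_game Z X) (q + r) True" if "rmoves_win TB X (q + r) True" for r
        using rmoves_win_plus[OF that lwins_budget_mono[OF X]] by simp
      have "plus_game z X |\<in>| lopts (plus_game Z X)"
        using z(1) by (simp add: lopts_plus_game)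
      then show "lmove_wins TB (plus_game Z X) q False"
        using X z(2) unfolding lmove_wins_def lwins_le_def by auto
    qed (rule lmove_wins_plus)
  qed
  then show ?thesis
    using lwins_le_plus unfolding lwins_lt_def by blast
qed

end

context
  fixes TB :: nat and Z X :: game
  assumes options_X: "\<And>x. x |\<in>| lopts X |\<union>| ropts X \<Longrightarrow> lwins_le TB (plus_game Z x) x"
    and lopts_Z: "\<And>z. z |\<in>| lopts Z \<Longrightarrow> lwins_lt TB (plus_game z X) X"
begin

lemma rmoves_win_plus_dual: "rmoves_win TB (plus_game Z X) q m \<Longrightarrow> rmoves_win TB X q m"
  using options_X unfolding rmoves_win_def lwins_le_def by (force simp: ropts_plus_game)

lemma lmove_wins_plus_dual:
  assumes "lmove_wins TB (plus_game Z X) q m'" "\<not> lwins TB X q m" "\<not> m \<Longrightarrow> \<not> m'"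
  shows "lmove_wins TB X q m'"
proof -
  obtain w where w: "w |\<in>| lopts (plus_game Z X)" "lwins TB w q m'"
    using assms(1) unfolding lmove_wins_def by auto
  then consider (in_Z) z where "z |\<in>| lopts Z" "w = plus_game z X"
    | (in_X) x where "x |\<in>| lopts X" "w = plus_game Z x"
    by (auto simp: lopts_plus_game)
  then show ?thesis
  proof cases
    case in_Z
    then have "lwins TB X q m"
      using lopts_Z[OF in_Z(1)] w(2) assms(3) unfolding lwins_lt_def lwins_le_def
      by (cases m; cases m') auto
    with assms(2) show ?thesis ..
  next
    case in_X
    then show ?thesis
      using options_X[of x] w(2) unfolding lmove_wins_def lwins_le_def by auto
  qed
qed

lemma lwins_le_plus_dual: "lwins_le TB (plus_game Z X) X"
  unfolding lwins_le_def
proof (intro allI impI)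
  fix p m assume W: "lwins TB (plus_game Z X) p m"
  show "lwins TB X p m"
  proof (rule ccontr)
    assume X: "\<not> lwins TB X p m"
    have "lwins TB X p m"
      using W
    proof (rule lwins_transfer)
      show "lmove_wins TB X q m'"
        if "q \<le> p" "\<not> m \<Longrightarrow> \<not> m'" "lmove_wins TB (plus_game Z X) q m'" for q m'
        using that X lwins_budget_mono lmove_wins_plus_dual by blast
    qed (rule rmoves_win_plus_dual)
    with X show False ..
  qed
qed

lemma lwins_lt_plus_dual:
  assumes z: "z |\<in>| ropts Z" "lwins_le TB (plus_game z X) X"
  shows "lwins_lt TB (plus_game Z X) X"
proof -
  have "lwins TB X q True" if W: "lwins TB (plus_game Z X) q False" for q
  proof (rule ccontr)
    assume X: "\<not> lwins TB X q True"
    obtain l where l: "l \<le> q" and round: "\<forall>r\<le>TB - q. round_won TB (plus_game Z X) q False l r"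
      using W unfolding lwins_iff_round_won by blast
    have "\<not> lwins TB X (q - l) True"
      using X lwins_budget_mono[of TB X "q - l" True q] by auto
    then have "lmove_wins TB (plus_game Z X) (q - l) False \<Longrightarrow> lmove_wins TB X (q - l) False"
      using lmove_wins_plus_dual by blast
    moreover have "l \<noteq> 0"
    proof
      assume "l = 0"
      then have "rmoves_win TB (plus_game Z X) q True"
        using round unfolding round_won_def by auto
      moreover have "plus_game z X |\<in>| ropts (plus_game Z X)"
        using z(1) by (simp add: ropts_plus_game)
      ultimately have "lwins TB X q True"
        using z(2) unfolding rmoves_win_def lwins_le_def by auto
      with X show False ..
    qed
    ultimately have "lwins TB X q True"
      using lwins_with_marker[OF l round] rmoves_win_plus_dual by blast
    with X show False ..
  qed
  then show ?thesis
    using lwins_le_plus_dual unfolding lwins_lt_def by blast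
qed

end

section \<open>Differences of numbers\<close>

lemma ropt_nonneg_difference:
  assumes z: "z |\<in>| ropts (minus_game H G)"
    and G: "conv_number G" and H: "conv_number H" and GH: "conv_le G H"
  obtains G' H' where "z = minus_game H' G'" "conv_number G'" "conv_number H'" "conv_lt G' H'"
    "size G' + size H' < size G + size H"
proof -
  from z consider (in_H) h where "h |\<in>| ropts H" "z = minus_game h G"
    | (in_G) g where "g |\<in>| lopts G" "z = minus_game H g"
    by (auto simp: ropts_plus_game ropts_conj_game)
  then show ?thesis
  proof cases
    case in_H
    with H have "conv_number h" "conv_lt H h"
      using conv_number_ropt by auto
    with GH have "conv_lt G h"
      unfolding conv_lt_def using conv_le_trans by blast
    with in_H G \<open>conv_number h\<close> show ?thesis
      using size_ropts that by fastforce
  next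
    case in_G
    with G have "conv_number g" "conv_lt g G"
      using conv_number_lopt by auto
    with GH have "conv_lt g H"
      unfolding conv_lt_def using conv_le_trans by blast
    with in_G H \<open>conv_number g\<close> show ?thesis
      using size_lopts that by fastforce
  qed
qed

lemma lopt_nonpos_difference:
  assumes z: "z |\<in>| lopts (minus_game G H)"
    and G: "conv_number G" and H: "conv_number H" and GH: "conv_le G H"
  obtains G' H' where "z = minus_game G' H'" "conv_number G'" "conv_number H'" "conv_lt G' H'"
    "size G' + size H' < size G + size H"
proof -
  from z consider (in_G) g where "g |\<in>| lopts G" "z = minus_game g H"
    | (in_H) h where "h |\<in>| ropts H" "z = minus_game G h"
    by (auto simp: lopts_plus_game lopts_conj_game)
  then show ?thesis
  proof cases
    case in_G
    with G have "conv_number g" "conv_lt g G"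
      using conv_number_lopt by auto
    with GH have "conv_lt g H"
      unfolding conv_lt_def using conv_le_trans by blast
    with in_G H \<open>conv_number g\<close> show ?thesis
      using size_lopts that by fastforce
  next
    case in_H
    with H have "conv_number h" "conv_lt H h"
      using conv_number_ropt by auto
    with GH have "conv_lt G h"
      unfolding conv_lt_def using conv_le_trans by blast
    with in_H G \<open>conv_number h\<close> show ?thesis
      using size_ropts that by fastforce
  qed
qed

lemma lopt_difference_if_not_conv_le:
  assumes "\<not> conv_le H G" and G: "conv_number G" and H: "conv_number H"
  obtains G' H' where "minus_game H' G' |\<in>| lopts (minus_game H G)"
    "conv_number G'" "conv_number H'" "conv_le G' H'" "size G' + size H' < size G + size H"
proof -
  from assms(1) consider (in_H) h where "h |\<in>| lopts H" "conv_le G h"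
    | (in_G) g where "g |\<in>| ropts G" "conv_le g H"
    by (subst (asm) conv_le_iff) auto
  then show ?thesis
  proof cases
    case in_H
    then show ?thesis
      using that[of h G] G conv_number_lopt[OF H] size_lopts[of h H]
      by (auto simp: lopts_plus_game)
  next
    case in_G
    then show ?thesis
      using that[of H g] H conv_number_ropt[OF G] size_ropts[of g G]
      by (auto simp: lopts_plus_game lopts_conj_game)
  qed
qed

lemma ropt_difference_if_not_conv_le:
  assumes "\<not> conv_le H G" and G: "conv_number G" and H: "conv_number H"
  obtains G' H' where "minus_game G' H' |\<in>| ropts (minus_game G H)"
    "conv_number G'" "conv_number H'" "conv_le G' H'" "size G' + size H' < size G + size H"
proof -
  from assms(1) consider (in_H) h where "h |\<in>| lopts H" "conv_le G h"
    | (in_G) g where "g |\<in>| ropts G" "conv_le g H"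
    by (subst (asm) conv_le_iff) auto
  then show ?thesis
  proof cases
    case in_H
    then show ?thesis
      using that[of G h] G conv_number_lopt[OF H] size_lopts[of h H]
      by (auto simp: ropts_plus_game ropts_conj_game)
  next
    case in_G
    then show ?thesis
      using that[of g H] H conv_number_ropt[OF G] size_ropts[of g G]
      by (auto simp: ropts_plus_game)
  qed
qed

lemma lwins_plus_nonneg_difference:
  assumes "conv_number G" "conv_number H" "conv_le G H"
  shows "lwins_le TB X (plus_game (minus_game H G) X) \<and>
    (\<not> conv_le H G \<longrightarrow> lwins_lt TB X (plus_game (minus_game H G) X))"
  using assms
proof (induction "size G + size H + size X" arbitrary: G H X rule: less_induct)
  case less
  let ?Z = "minus_game H G"
  have options: "lwins_le TB x (plus_game ?Z x)" if "x |\<in>| lopts X |\<union>| ropts X" for x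
    using that less size_lopts size_ropts by fastforce
  have ropts: "lwins_lt TB X (plus_game z X)" if z: "z |\<in>| ropts ?Z" for z
  proof -
    obtain G' H' where "z = minus_game H' G'" "conv_number G'" "conv_number H'" "conv_lt G' H'"
      "size G' + size H' < size G + size H"
      using ropt_nonneg_difference[OF z less(2-4)] .
    then show ?thesis
      using less(1)[of G' H' X] unfolding conv_lt_def by simp
  qed
  have "lwins_lt TB X (plus_game ?Z X)" if not_le: "\<not> conv_le H G"
  proof -
    obtain G' H' where "minus_game H' G' |\<in>| lopts ?Z"
      "conv_number G'" "conv_number H'" "conv_le G' H'" "size G' + size H' < size G + size H"
      using lopt_difference_if_not_conv_le[OF not_le less(2,3)] .
    then show ?thesis
      using less(1)[of G' H' X] lwins_lt_plus[OF options ropts] by auto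
  qed
  then show ?case
    using lwins_le_plus[OF options ropts] by blast
qed

lemma lwins_plus_nonpos_difference:
  assumes "conv_number G" "conv_number H" "conv_le G H"
  shows "lwins_le TB (plus_game (minus_game G H) X) X \<and>
    (\<not> conv_le H G \<longrightarrow> lwins_lt TB (plus_game (minus_game G H) X) X)"
  using assms
proof (induction "size G + size H + size X" arbitrary: G H X rule: less_induct)
  case less
  let ?Z = "minus_game G H"
  have options: "lwins_le TB (plus_game ?Z x) x" if "x |\<in>| lopts X |\<union>| ropts X" for x
    using that less size_lopts size_ropts by fastforce
  have lopts: "lwins_lt TB (plus_game z X) X" if z: "z |\<in>| lopts ?Z" for z
  proof -
    obtain G' H' where "z = minus_game G' H'" "conv_number G'" "conv_number H'" "conv_lt G' H'"
      "size G' + size H' < size G + size H"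
      using lopt_nonpos_difference[OF z less(2-4)] .
    then show ?thesis
      using less(1)[of G' H' X] unfolding conv_lt_def by simp
  qed
  have "lwins_lt TB (plus_game ?Z X) X" if not_le: "\<not> conv_le H G"
  proof -
    obtain G' H' where "minus_game G' H' |\<in>| ropts ?Z"
      "conv_number G'" "conv_number H'" "conv_le G' H'" "size G' + size H' < size G + size H"
      using ropt_difference_if_not_conv_le[OF not_le less(2,3)] .
    then show ?thesis
      using less(1)[of G' H' X] lwins_lt_plus_dual[OF options lopts] by auto
  qed
  then show ?case
    using lwins_le_plus_dual[OF options lopts] by blast
qed

lemma lwins_le_plus_of_conv_le:
  assumes A: "conv_number A" and B: "conv_number B" and AB: "conv_le A B"
  shows "lwins_le TB (plus_game A X) (plus_game B X)"
proof -
  have "lwins_le TB (plus_game A X) (plus_game (minus_game B A) (plus_game A X))"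
    using lwins_plus_nonneg_difference[OF A B AB] by blast
  moreover have "plus_game (minus_game B A) (plus_game A X) = plus_game (minus_game A A) (plus_game B X)"
    by (simp add: plus_game_assoc plus_game_comm plus_game_left_comm)
  moreover have "lwins_le TB (plus_game (minus_game A A) (plus_game B X)) (plus_game B X)"
    using lwins_plus_nonpos_difference[OF A A conv_le_refl] by blast
  ultimately show ?thesis
    unfolding lwins_le_def by simp
qed

lemma game_geI: "(\<And>X. lwins_le TB (plus_game H X) (plus_game G X)) \<Longrightarrow> game_ge TB G H"
  unfolding game_ge_def lwins_le_def outcome_def outcome_le_def by auto

lemma game_ge_trans: "game_ge TB A B \<Longrightarrow> game_ge TB B C \<Longrightarrow> game_ge TB A C"
  unfolding game_ge_def outcome_le_def by (metis outcome.exhaust)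

lemma conv_number_of_is_number: "is_number TB G \<Longrightarrow> conv_number G"
proof (induction rule: is_number.induct)
  case (1 L R)
  have "\<not> conv_le y x" if x: "x \<in> fset L" and y: "y \<in> fset R" for x y
  proof
    assume "conv_le y x"
    then have "game_ge TB x y"
      using 1(1,2) x y by (auto intro: game_geI lwins_le_plus_of_conv_le)
    moreover have "game_ge TB y (Game L R)" "\<not> game_ge TB x (Game L R)"
      using 1(3,4) x y unfolding game_gt_def by auto
    ultimately show False
      using game_ge_trans by blast
  qed
  with 1(1,2) show ?case
    by (intro conv_numberI) auto
qed

theorem mainTheorem7:
  fixes TB :: nat and G :: game
  assumes "is_number TB G"
  shows "game_eq TB (plus_game G (conj_game G)) zero_game"
proof -
  have G: "conv_number G"
    using conv_number_of_is_number[OF assms] .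
  have "lwins_le TB X (plus_game (minus_game G G) X)" for X
    using lwins_plus_nonneg_difference[OF G G conv_le_refl] by blast
  moreover have "lwins_le TB (plus_game (minus_game G G) X) X" for X
    using lwins_plus_nonpos_difference[OF G G conv_le_refl] by blast
  ultimately show ?thesis
    unfolding game_eq_def by (auto intro: game_geI simp: plus_game_zero_left)
qed

end
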